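(* Let $\Gamma=(\mathcal{V},\mathcal{H})$ be a bipartite oriented hypergraph. Then $\Gamma$ is isospectral to its underlying hypergraph $\Gamma'$, i.e. the normalized Laplacian $L$ of $\Gamma$ and the normalized Laplacian $L'$ of $\Gamma'$ have the same eigenvalues with the same multiplicities. In particular, $\Gamma$ is isospectral to every other bipartite oriented hypergraph that has the same underlying hypergraph as $\Gamma$.
   Context: An oriented hypergraph is a pair $\Gamma=(\mathcal{V},\mathcal{H})$ where $\mathcal{V}=\{v_1,\ldots,v_N\}$ is a finite set of vertices and each hyperedge $h\in\mathcal{H}$ is a pair $(h_{in},h_{out})$ of disjoint nonempty subsets of $\mathcal{V}$ (inputs and outputs). Standing assumption: $\Gamma$ has no isolated vertices. Two vertices are co-oriented in $h$ if they lie in the same one of $h_{in},h_{out}$, and anti-oriented in $h$ if they lie in different ones. The degree $\deg(v)$ is the number of hyperedges containing $v$ (i.e. with $v\in h_{in}\cup h_{out}$); $D$ is the diagonal matrix of degrees. The adjacency matrix $A$ has $A_{ii}=0$ and, for $i\neq j$, $A_{ij}=\#\{h: v_i,v_j \text{ anti-oriented in } h\}-\#\{h: v_i,v_j\text{ co-oriented in } h\}$. The normalized Laplacian is $L=\mathrm{Id}-D^{-1}A$. The underlying hypergraph $\Gamma'$ has the same vertices and hyperedges $(h_{in}\cup h_{out},\emptyset)$ for $h\in\mathcal{H}$; hence its degrees coincide with those of $\Gamma$, its adjacency matrix is $A'_{ii}=0$, $A'_{ij}=-\#\{h\in\mathcal{H}: v_i,v_j\in h_{in}\cup h_{out}\}$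 for $i\ne j$, and $L'=\mathrm{Id}-D^{-1}A'$. $\Gamma$ is bipartite if $\mathcal{V}=\mathcal{V}_1\sqcup\mathcal{V}_2$ such that every hyperedge either has all its inputs in $\mathcal{V}_1$ and all its outputs in $\mathcal{V}_2$, or all its inputs in $\mathcal{V}_2$ and all its outputs in $\mathcal{V}_1$. *)

theory Defs
  imports "Jordan_Normal_Form.Char_Poly" "HOL-Library.Multiset"
begin

text \<open>Vertices are 0..<N. A hyperedge is a pair (inputs, outputs) of vertex sets;
  the family of hyperedges is a multiset (the paper's set of hyperedges is the
  special case of multiplicity at most one).\<close>

type_synonym hedge = "nat set \<times> nat set"

definition oriented_hypergraph :: "nat \<Rightarrow> hedge multiset \<Rightarrow> bool" where
  "oriented_hypergraph N H \<longleftrightarrow>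
     (\<forall>h \<in># H. fst h \<noteq> {} \<and> snd h \<noteq> {} \<and> fst h \<inter> snd h = {}
               \<and> fst h \<union> snd h \<subseteq> {..<N})
   \<and> (\<forall>v < N. \<exists>h \<in># H. v \<in> fst h \<union> snd h)"

definition bipartite :: "nat \<Rightarrow> hedge multiset \<Rightarrow> bool" where
  "bipartite N H \<longleftrightarrow> (\<exists>V1 V2. V1 \<union> V2 = {..<N} \<and> V1 \<inter> V2 = {} \<and>
     (\<forall>h \<in># H. (fst h \<subseteq> V1 \<and> snd h \<subseteq> V2) \<or> (fst h \<subseteq> V2 \<and> snd h \<subseteq> V1)))"

definition hdeg :: "hedge multiset \<Rightarrow> nat \<Rightarrow> nat" where
  "hdeg H v = size (filter_mset (\<lambda>h. v \<in> fst h \<union> snd h) H)"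

definition co_oriented :: "hedge \<Rightarrow> nat \<Rightarrow> nat \<Rightarrow> bool" where
  "co_oriented h u v \<longleftrightarrow> (u \<in> fst h \<and> v \<in> fst h) \<or> (u \<in> snd h \<and> v \<in> snd h)"

definition anti_oriented :: "hedge \<Rightarrow> nat \<Rightarrow> nat \<Rightarrow> bool" where
  "anti_oriented h u v \<longleftrightarrow> (u \<in> fst h \<and> v \<in> snd h) \<or> (u \<in> snd h \<and> v \<in> fst h)"

definition adj :: "hedge multiset \<Rightarrow> nat \<Rightarrow> nat \<Rightarrow> int" where
  "adj H i j = (if i = j then 0 else
     int (size (filter_mset (\<lambda>h. anti_oriented h i j) H))
     - int (size (filter_mset (\<lambda>h. co_oriented h i j) H)))"

definition norm_laplacian :: "nat \<Rightarrow> hedge multiset \<Rightarrow> real mat" where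
  "norm_laplacian N H = mat N N (\<lambda>(i, j).
     (if i = j then 1 else 0) - real_of_int (adj H i j) / real (hdeg H i))"

definition underlying :: "hedge multiset \<Rightarrow> hedge multiset" where
  "underlying H = image_mset (\<lambda>h. (fst h \<union> snd h, {})) H"

text \<open>Isospectral: the normalized Laplacians have the same eigenvalues with the same
  (algebraic) multiplicities, i.e. the same characteristic polynomial.\<close>
definition isospectral :: "nat \<Rightarrow> hedge multiset \<Rightarrow> hedge multiset \<Rightarrow> bool" where
  "isospectral N H1 H2 \<longleftrightarrow> char_poly (norm_laplacian N H1) = char_poly (norm_laplacian N H2)"

end

theory Submission
  imports Defs
begin

text \<open>Flipping the orientation of every hyperedge at the vertices of one side of a bipartition
  turns co-oriented pairs into anti-oriented ones and vice versa.  Hence, with the sign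
  \<open>s v = \<plusminus>1\<close> according to the side of \<open>v\<close>, the adjacency matrix of a bipartite \<open>\<Gamma>\<close> is
  \<open>S A' S\<close> with \<open>S = diag s\<close>, and since the degrees agree, \<open>L = S L' S\<close>.  As \<open>S\<^sup>2 = Id\<close>,
  \<open>L\<close> and \<open>L'\<close> are similar, so they have the same characteristic polynomial.  Isospectrality
  to another bipartite hypergraph with the same underlying hypergraph follows by transitivity.\<close>

lemma similar_mat_sign_conj:
  fixes A :: "'a :: comm_ring_1 mat"
  assumes A: "A \<in> carrier_mat n n" and sign: "\<And>i. i < n \<Longrightarrow> s i * s i = 1"
  shows "similar_mat (mat n n (\<lambda>(i, j). s i * A $$ (i, j) * s j)) A"
proof -
  have "mat_diag n (\<lambda>i. s i * s i) = 1\<^sub>m n"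
    using sign by (auto simp: mat_diag_def intro!: eq_matI)
  then have involution: "mat_diag n s * mat_diag n s = 1\<^sub>m n"
    by simp
  have conj: "mat n n (\<lambda>(i, j). s i * A $$ (i, j) * s j) = mat_diag n s * A * mat_diag n s"
    using A by (auto simp: mat_diag_mult_left mat_diag_mult_right[of _ n n] intro!: eq_matI)
  show ?thesis
    using A involution conj by (intro similar_matI[where n = n]) (auto intro!: mult_carrier_mat)
qed

definition side_sign :: "nat set \<Rightarrow> nat \<Rightarrow> 'a :: ring_1" where
  "side_sign V v = (if v \<in> V then 1 else -1)"

lemma side_sign_square [simp]: "side_sign V v * side_sign V v = 1"
  by (simp add: side_sign_def)

definition separates :: "nat set \<Rightarrow> hedge \<Rightarrow> bool" where
  "separates V h \<longleftrightarrow> (fst h \<subseteq> V \<and> snd h \<inter> V = {}) \<or> (fst h \<inter> V = {} \<and> snd h \<subseteq> V)"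

lemma bipartite_obtains_separating_side:
  assumes "bipartite N H"
  obtains V where "\<forall>h \<in># H. separates V h"
proof -
  obtain V1 V2 where "V1 \<inter> V2 = {}"
    and "\<forall>h \<in># H. (fst h \<subseteq> V1 \<and> snd h \<subseteq> V2) \<or> (fst h \<subseteq> V2 \<and> snd h \<subseteq> V1)"
    using assms unfolding bipartite_def by blast
  then have "\<forall>h \<in># H. separates V1 h"
    unfolding separates_def by blast
  then show thesis by (rule that)
qed

lemma co_oriented_iff_same_side:
  assumes "separates V h"
  shows "co_oriented h i j \<longleftrightarrow>
    i \<in> fst h \<union> snd h \<and> j \<in> fst h \<union> snd h \<and> (i \<in> V \<longleftrightarrow> j \<in> V)"
  using assms unfolding separates_def co_oriented_def by blast

lemma anti_oriented_iff_opposite_sides: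
  assumes "separates V h"
  shows "anti_oriented h i j \<longleftrightarrow>
    i \<in> fst h \<union> snd h \<and> j \<in> fst h \<union> snd h \<and> (i \<in> V \<longleftrightarrow> j \<notin> V)"
  using assms unfolding separates_def anti_oriented_def by blast

lemma hdeg_underlying [simp]: "hdeg (underlying H) v = hdeg H v"
  by (simp add: hdeg_def underlying_def filter_mset_image_mset)

lemma adj_underlying:
  "adj (underlying H) i j = (if i = j then 0 else
     - int (size (filter_mset (\<lambda>h. i \<in> fst h \<union> snd h \<and> j \<in> fst h \<union> snd h) H)))"
  by (simp add: adj_def underlying_def filter_mset_image_mset anti_oriented_def co_oriented_def)

lemma adj_separated_eq_signed_adj_underlying:
  assumes "\<forall>h \<in># H. separates V h"
  shows "adj H i j = side_sign V i * side_sign V j * adj (underlying H) i j"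
proof -
  let ?both = "\<lambda>h. i \<in> fst h \<union> snd h \<and> j \<in> fst h \<union> snd h"
  have "filter_mset (\<lambda>h. co_oriented h i j) H
      = filter_mset (\<lambda>h. ?both h \<and> (i \<in> V \<longleftrightarrow> j \<in> V)) H"
    using assms by (intro filter_mset_cong) (auto simp: co_oriented_iff_same_side)
  moreover have "filter_mset (\<lambda>h. anti_oriented h i j) H
      = filter_mset (\<lambda>h. ?both h \<and> (i \<in> V \<longleftrightarrow> j \<notin> V)) H"
    using assms by (intro filter_mset_cong) (auto simp: anti_oriented_iff_opposite_sides)
  ultimately show ?thesis
    by (auto simp: adj_def[of H] adj_underlying side_sign_def)
qed

lemma norm_laplacian_separated_eq_sign_conj:
  assumes "\<forall>h \<in># H. separates V h"
  shows "norm_laplacian N H = mat N N (\<lambda>(i, j).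
    side_sign V i * norm_laplacian N (underlying H) $$ (i, j) * side_sign V j)"
proof (rule eq_matI)
  fix i j assume "i < dim_row (mat N N (\<lambda>(i, j).
      side_sign V i * norm_laplacian N (underlying H) $$ (i, j) * side_sign V j))"
    and "j < dim_col (mat N N (\<lambda>(i, j).
      side_sign V i * norm_laplacian N (underlying H) $$ (i, j) * side_sign V j))"
  then have ij: "i < N" "j < N" by auto
  have "real_of_int (adj H i j)
      = side_sign V i * side_sign V j * real_of_int (adj (underlying H) i j)"
    unfolding adj_separated_eq_signed_adj_underlying[OF assms] by (simp add: side_sign_def)
  then show "norm_laplacian N H $$ (i, j) = mat N N (\<lambda>(i, j).
      side_sign V i * norm_laplacian N (underlying H) $$ (i, j) * side_sign V j) $$ (i, j)"
    using ij by (simp add: norm_laplacian_def adj_def algebra_simps)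
qed (simp_all add: norm_laplacian_def)

theorem isospectral_underlying:
  assumes "bipartite N H"
  shows "isospectral N H (underlying H)"
proof -
  obtain V where "\<forall>h \<in># H. separates V h"
    using assms by (rule bipartite_obtains_separating_side)
  then have "norm_laplacian N H = mat N N (\<lambda>(i, j).
      side_sign V i * norm_laplacian N (underlying H) $$ (i, j) * side_sign V j)"
    by (rule norm_laplacian_separated_eq_sign_conj)
  also have "similar_mat \<dots> (norm_laplacian N (underlying H))"
    by (intro similar_mat_sign_conj) (simp_all add: norm_laplacian_def)
  finally show ?thesis
    unfolding isospectral_def by (rule char_poly_similar)
qed

text \<open>Absence of isolated vertices is not needed: a vertex of degree \<open>0\<close> has degree \<open>0\<close> in
  both hypergraphs, so the junk division by \<open>0\<close> occurs in matching entries of \<open>L\<close> and \<open>L'\<close>.\<close>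

theorem mainTheorem1:
  fixes N :: nat and H :: "hedge multiset"
  assumes "oriented_hypergraph N H" and "bipartite N H"
  shows "isospectral N H (underlying H)
    \<and> (\<forall>H2. oriented_hypergraph N H2 \<and> bipartite N H2 \<and> underlying H2 = underlying H
           \<longrightarrow> isospectral N H H2)"
  using isospectral_underlying[OF assms(2)] isospectral_underlying[of N]
  unfolding isospectral_def by metis

end
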